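(* Let $G=(V,E)$ be a finite connected, non-complete undirected graph with $\mathrm{so}(G)=m$ and $m>0$. Let $P$ be the distribution of a random vector $\mathbf X=(X_\alpha)_{\alpha\in V}$ with values in a product space, and suppose $P$ is perfectly Markov to $G$. Then $G=G_m$, i.e. $E=E_m$, where $G_m=(V,E_m)$ is the $m$-graph of $P$.
   Context: A set $S$ separates disjoint nonempty vertex sets $A,B$ in $G$ if every path from $A$ to $B$ meets $S$. For non-adjacent distinct $\alpha,\beta$, a separator is such an $S\subseteq V\setminus\{\alpha,\beta\}$ for $A=\{\alpha\}$, $B=\{\beta\}$. We write $\mathrm{ms}_G(\alpha,\beta)$ for the set of inclusion-minimal separators. The separability order is $$\mathrm{so}(G)=\max_{\alpha\ne\beta\text{ non-adjacent}}\min\{|S|:S\in\mathrm{ms}_G(\alpha,\beta)\}$$ for non-complete $G$, and $+\infty$ for complete $G$. Write $\mathbf X_S=(X_\gamma)_{\gamma\in S}$. $P$ satisfies the global Markov property w.r.t. $G$ if, for all disjoint $A,B,S\subseteq V$ with $A,B$ nonempty, $S$ separating $A,B$ implies $\mathbf X_A\perp\!\!\!\perp\mathbf X_B\mid\mathbf X_S$. $P$ is perfectly Markov to $G$ if it satisfies the global Markov property and, for all disjoint nonempty $A,B,S\subseteq V$, $\mathbf X_A\perp\!\!\!\perp\mathbf X_B\mid\mathbf X_S$ implies that $S$ separates $A$ and $B$ in $G$. For $k\in\{0,\dots,|V|-2\}$, the $k$-graph $G_k=(V,E_k)$ has distinct $\alpha,\beta$ non-adjacent iff there exists $S\subseteq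 V\setminus\{\alpha,\beta\}$ with $|S|=k$ and $X_\alpha\perp\!\!\!\perp X_\beta\mid\mathbf X_S$. *)

theory Defs
  imports "HOL-Probability.Probability"
begin

definition graph :: "'v set \<Rightarrow> ('v \<times> 'v) set \<Rightarrow> bool" where
  "graph V E \<longleftrightarrow> finite V \<and> E \<subseteq> V \<times> V \<and> sym E \<and> (\<forall>v. (v, v) \<notin> E)"

definition walk :: "'v set \<Rightarrow> ('v \<times> 'v) set \<Rightarrow> 'v list \<Rightarrow> bool" where
  "walk V E xs \<longleftrightarrow> xs \<noteq> [] \<and> set xs \<subseteq> V \<and> (\<forall>i. Suc i < length xs \<longrightarrow> (xs ! i, xs ! Suc i) \<in> E)"

definition connected_graph :: "'v set \<Rightarrow> ('v \<times> 'v) set \<Rightarrow> bool" where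
  "connected_graph V E \<longleftrightarrow> (\<forall>a\<in>V. \<forall>b\<in>V. \<exists>xs. walk V E xs \<and> hd xs = a \<and> last xs = b)"

definition complete_graph :: "'v set \<Rightarrow> ('v \<times> 'v) set \<Rightarrow> bool" where
  "complete_graph V E \<longleftrightarrow> (\<forall>a\<in>V. \<forall>b\<in>V. a \<noteq> b \<longrightarrow> (a, b) \<in> E)"

definition separates :: "'v set \<Rightarrow> ('v \<times> 'v) set \<Rightarrow> 'v set \<Rightarrow> 'v set \<Rightarrow> 'v set \<Rightarrow> bool" where
  "separates V E A B S \<longleftrightarrow>
     (\<forall>xs. walk V E xs \<and> hd xs \<in> A \<and> last xs \<in> B \<longrightarrow> set xs \<inter> S \<noteq> {})"

definition separator :: "'v set \<Rightarrow> ('v \<times> 'v) set \<Rightarrow> 'v \<Rightarrow> 'v \<Rightarrow> 'v set \<Rightarrow> bool" where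
  "separator V E a b S \<longleftrightarrow> S \<subseteq> V - {a, b} \<and> separates V E {a} {b} S"

definition ms :: "'v set \<Rightarrow> ('v \<times> 'v) set \<Rightarrow> 'v \<Rightarrow> 'v \<Rightarrow> 'v set set" where
  "ms V E a b = {S. separator V E a b S \<and> (\<forall>T. T \<subset> S \<longrightarrow> \<not> separator V E a b T)}"

definition so :: "'v set \<Rightarrow> ('v \<times> 'v) set \<Rightarrow> enat" where
  "so V E = (if complete_graph V E then \<infinity>
     else enat (Max {Min (card ` ms V E a b) | a b. a \<in> V \<and> b \<in> V \<and> a \<noteq> b \<and> (a, b) \<notin> E}))"

definition gen_sigma :: "'a measure \<Rightarrow> ('v \<Rightarrow> 'b measure) \<Rightarrow> ('v \<Rightarrow> 'a \<Rightarrow> 'b) \<Rightarrow> 'v set \<Rightarrow> 'a measure" where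
  "gen_sigma M N X S = sigma (space M) (\<Union>i\<in>S. {X i -` A \<inter> space M | A. A \<in> sets (N i)})"

definition cond_indep :: "'a measure \<Rightarrow> ('v \<Rightarrow> 'b measure) \<Rightarrow> ('v \<Rightarrow> 'a \<Rightarrow> 'b)
    \<Rightarrow> 'v set \<Rightarrow> 'v set \<Rightarrow> 'v set \<Rightarrow> bool" where
  "cond_indep M N X A B S \<longleftrightarrow>
     (\<forall>a \<in> sets (gen_sigma M N X A). \<forall>b \<in> sets (gen_sigma M N X B).
        AE x in M. real_cond_exp M (gen_sigma M N X S) (indicator (a \<inter> b)) x
                 = real_cond_exp M (gen_sigma M N X S) (indicator a) x
                   * real_cond_exp M (gen_sigma M N X S) (indicator b) x)"

definition global_markov :: "'v set \<Rightarrow> ('v \<times> 'v) set \<Rightarrow> 'a measure \<Rightarrow> ('v \<Rightarrow> 'b measure)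
    \<Rightarrow> ('v \<Rightarrow> 'a \<Rightarrow> 'b) \<Rightarrow> bool" where
  "global_markov V E M N X \<longleftrightarrow>
     (\<forall>A B S. A \<subseteq> V \<and> B \<subseteq> V \<and> S \<subseteq> V \<and> A \<inter> B = {} \<and> A \<inter> S = {} \<and> B \<inter> S = {}
        \<and> A \<noteq> {} \<and> B \<noteq> {} \<and> separates V E A B S \<longrightarrow> cond_indep M N X A B S)"

definition perfectly_markov :: "'v set \<Rightarrow> ('v \<times> 'v) set \<Rightarrow> 'a measure \<Rightarrow> ('v \<Rightarrow> 'b measure)
    \<Rightarrow> ('v \<Rightarrow> 'a \<Rightarrow> 'b) \<Rightarrow> bool" where
  "perfectly_markov V E M N X \<longleftrightarrow> global_markov V E M N X \<and>
     (\<forall>A B S. A \<subseteq> V \<and> B \<subseteq> V \<and> S \<subseteq> V \<and> A \<inter> B = {} \<and> A \<inter> S = {} \<and> B \<inter> S = {}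
        \<and> A \<noteq> {} \<and> B \<noteq> {} \<and> S \<noteq> {} \<and> cond_indep M N X A B S \<longrightarrow> separates V E A B S)"

definition k_graph_edges :: "'v set \<Rightarrow> 'a measure \<Rightarrow> ('v \<Rightarrow> 'b measure) \<Rightarrow> ('v \<Rightarrow> 'a \<Rightarrow> 'b)
    \<Rightarrow> nat \<Rightarrow> ('v \<times> 'v) set" where
  "k_graph_edges V M N X k = {(a, b). a \<in> V \<and> b \<in> V \<and> a \<noteq> b \<and>
      \<not> (\<exists>S. S \<subseteq> V - {a, b} \<and> card S = k \<and> cond_indep M N X {a} {b} S)}"

end

theory Submission
  imports Defs
begin

(* Let m = so(G) > 0.  The two inclusions of E = E_m come from the two halves
   of perfect Markovness.
   - An edge (a,b) can never be separated, since the walk [a,b] avoids every S within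
     V - {a,b}.  By faithfulness, X_a and X_b are therefore dependent given every nonempty
     X_S, in particular every S of size m > 0; so (a,b) lies in E_m.
   - A non-adjacent pair (a,b) has a minimal separator S0 with |S0| <= so(G) = m.  Padding
     S0 with further vertices of V - {a,b} keeps it a separator and reaches size exactly m
     (possible because so(G) <= |V| - 2).  By the global Markov property X_a and X_b are
     independent given X_S, so (a,b) is not in E_m. *)

lemma walk_edge:
  assumes "(a, b) \<in> E" "a \<in> V" "b \<in> V"
  shows "walk V E [a, b]"
  using assms unfolding walk_def by (auto simp: less_Suc_eq)

lemma separates_mono:
  assumes "separates V E A B S" "S \<subseteq> T"
  shows "separates V E A B T"
  using assms unfolding separates_def by blast

lemma adjacent_not_separated:
  assumes "E \<subseteq> V \<times> V" "(a, b) \<in> E" "S \<subseteq> V - {a, b}"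
  shows "\<not> separates V E {a} {b} S"
proof
  assume "separates V E {a} {b} S"
  moreover have "walk V E [a, b]" using assms(1,2) by (intro walk_edge) auto
  ultimately have "set [a, b] \<inter> S \<noteq> {}" unfolding separates_def by auto
  with assms(3) show False by auto
qed

text \<open>For non-adjacent vertices, all other vertices form a separator: a walk from a
  to b avoiding them could only use a and b and would need the edge (a, b).\<close>
lemma full_separator:
  assumes "graph V E" "a \<in> V" "b \<in> V" "a \<noteq> b" "(a, b) \<notin> E"
  shows "separator V E a b (V - {a, b})"
  unfolding separator_def separates_def
proof (intro conjI allI impI)
  fix xs assume xs: "walk V E xs \<and> hd xs \<in> {a} \<and> last xs \<in> {b}"
  show "set xs \<inter> (V - {a, b}) \<noteq> {}"
  proof
    assume avoid: "set xs \<inter> (V - {a, b}) = {}"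
    from xs have ne: "xs \<noteq> []" and sub: "set xs \<subseteq> V" by (auto simp: walk_def)
    have "xs \<noteq> [a]"
    proof
      assume "xs = [a]"
      with xs assms(4) show False by simp
    qed
    with ne xs have long: "Suc 0 < length xs" by (cases xs) auto
    with xs have step: "(a, xs ! 1) \<in> E" by (auto simp: walk_def hd_conv_nth)
    have "xs ! 1 \<in> {a, b}" using long avoid sub nth_mem by fastforce
    moreover have "xs ! 1 \<noteq> a" using step assms(1) unfolding graph_def by auto
    ultimately show False using step assms(5) by auto
  qed
qed auto

text \<open>Every separator can be shrunk to an inclusion-minimal one: a separator of least
  cardinality is minimal.\<close>
lemma ms_exists:
  assumes "finite V" "separator V E a b S0"
  shows "\<exists>S\<in>ms V E a b. card S \<le> card S0"
proof -
  define n where "n = (LEAST n. \<exists>S. separator V E a b S \<and> card S = n)"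
  have "\<exists>S. separator V E a b S \<and> card S = n"
    unfolding n_def by (rule LeastI_ex) (use assms(2) in blast)
  then obtain S where S: "separator V E a b S" "card S = n" by blast
  have n_least: "n \<le> card T" if "separator V E a b T" for T
    unfolding n_def by (rule Least_le) (use that in blast)
  have "finite S" using S(1) assms(1) unfolding separator_def by (meson finite_Diff finite_subset)
  have "\<not> separator V E a b T" if "T \<subset> S" for T
    using n_least psubset_card_mono[OF \<open>finite S\<close> that] S(2) by fastforce
  then have "S \<in> ms V E a b" unfolding ms_def using S(1) by blast
  with S n_least[OF assms(2)] show ?thesis by auto
qed

lemma finite_ms:
  assumes "finite V"
  shows "finite (ms V E a b)"
proof -
  have "ms V E a b \<subseteq> Pow V" unfolding ms_def separator_def by auto
  with assms show ?thesis by (meson finite_Pow_iff finite_subset)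
qed

lemma min_ms_attained:
  assumes "graph V E" "a \<in> V" "b \<in> V" "a \<noteq> b" "(a, b) \<notin> E"
  shows "\<exists>S\<in>ms V E a b. card S = Min (card ` ms V E a b)"
proof -
  have fin: "finite V" using assms(1) unfolding graph_def by simp
  have "ms V E a b \<noteq> {}" using ms_exists[OF fin full_separator[OF assms]] by blast
  then have "Min (card ` ms V E a b) \<in> card ` ms V E a b"
    using finite_ms[OF fin] by (intro Min_in) auto
  then show ?thesis by auto
qed

definition min_sep_sizes :: "'v set \<Rightarrow> ('v \<times> 'v) set \<Rightarrow> nat set" where
  "min_sep_sizes V E =
     {Min (card ` ms V E a b) | a b. a \<in> V \<and> b \<in> V \<and> a \<noteq> b \<and> (a, b) \<notin> E}"

lemma so_eq_Max:
  assumes "\<not> complete_graph V E" "so V E = enat m"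
  shows "Max (min_sep_sizes V E) = m"
  using assms unfolding so_def min_sep_sizes_def by simp

lemma finite_min_sep_sizes:
  assumes "finite V"
  shows "finite (min_sep_sizes V E)"
proof -
  have "min_sep_sizes V E \<subseteq> (\<lambda>(a, b). Min (card ` ms V E a b)) ` (V \<times> V)"
    unfolding min_sep_sizes_def by auto
  with assms show ?thesis by (meson finite_SigmaI finite_imageI finite_subset)
qed

lemma so_bounds_separators:
  assumes "graph V E" "\<not> complete_graph V E" "so V E = enat m"
    and "a \<in> V" "b \<in> V" "a \<noteq> b" "(a, b) \<notin> E"
  shows "\<exists>S\<in>ms V E a b. card S \<le> m"
proof -
  have fin: "finite V" using assms(1) unfolding graph_def by simp
  have "Min (card ` ms V E a b) \<in> min_sep_sizes V E"
    unfolding min_sep_sizes_def using assms(4-7) by blast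
  then have "Min (card ` ms V E a b) \<le> m"
    using so_eq_Max[OF assms(2,3)] finite_min_sep_sizes[OF fin] by (metis Max_ge)
  with min_ms_attained[OF assms(1,4-7)] show ?thesis by (metis order.refl)
qed

text \<open>The separability order is attained by a minimal separator of some non-adjacent
  pair; as that separator avoids the pair, so(G) \<le> |V| - 2.\<close>
lemma so_le_card:
  assumes "graph V E" "\<not> complete_graph V E" "so V E = enat m"
  shows "m + 2 \<le> card V"
proof -
  have fin: "finite V" using assms(1) unfolding graph_def by simp
  have "min_sep_sizes V E \<noteq> {}"
    using assms(2) unfolding complete_graph_def min_sep_sizes_def by blast
  then have "m \<in> min_sep_sizes V E"
    using so_eq_Max[OF assms(2,3)] finite_min_sep_sizes[OF fin] Max_in by metis
  then obtain a b where ab: "a \<in> V" "b \<in> V" "a \<noteq> b" "(a, b) \<notin> E"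
    and m: "m = Min (card ` ms V E a b)" unfolding min_sep_sizes_def by blast
  obtain S where S: "S \<in> ms V E a b" "card S = m" using min_ms_attained[OF assms(1) ab] m by auto
  then have "S \<subseteq> V - {a, b}" unfolding ms_def separator_def by auto
  then have "m \<le> card (V - {a, b})" using S(2) fin by (metis card_mono finite_Diff)
  moreover have "card (V - {a, b}) = card V - 2" using ab fin by (simp add: card_Diff_subset)
  moreover have "card {a, b} \<le> card V" using ab fin by (intro card_mono) auto
  ultimately show ?thesis using ab(3) by simp
qed

lemma pad_subset:
  assumes "finite U" "S0 \<subseteq> U" "card S0 \<le> k" "k \<le> card U"
  shows "\<exists>S. S0 \<subseteq> S \<and> S \<subseteq> U \<and> card S = k"
proof -
  have fin0: "finite S0" using assms(1,2) by (rule finite_subset[rotated])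
  have "card (U - S0) = card U - card S0" using assms(2) fin0 by (simp add: card_Diff_subset)
  then have "k - card S0 \<le> card (U - S0)" using assms(4) by simp
  then obtain R where R: "R \<subseteq> U - S0" "card R = k - card S0"
    using obtain_subset_with_card_n by metis
  have "finite R" using R(1) assms(1) by (meson finite_Diff finite_subset)
  then have "card (S0 \<union> R) = k" using R fin0 assms(3) by (subst card_Un_disjoint) auto
  with R(1) assms(2) show ?thesis by blast
qed

lemma singleton_pair_conditions:
  assumes "a \<in> V" "b \<in> V" "a \<noteq> b" "S \<subseteq> V - {a, b}"
  shows "{a} \<subseteq> V \<and> {b} \<subseteq> V \<and> S \<subseteq> V \<and> {a} \<inter> {b} = {} \<and> {a} \<inter> S = {} \<and> {b} \<inter> S = {}
    \<and> {a} \<noteq> {} \<and> {b} \<noteq> {}"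
  using assms by auto

text \<open>Faithfulness: an edge of G stays an edge of every k-graph with k > 0, because
  conditioning on a nonempty set cannot make adjacent vertices independent.\<close>
lemma edge_in_k_graph:
  assumes "graph V E" "perfectly_markov V E M N X" "k > 0" "(a, b) \<in> E"
  shows "(a, b) \<in> k_graph_edges V M N X k"
proof -
  have EV: "E \<subseteq> V \<times> V" and ab: "a \<in> V" "b \<in> V" "a \<noteq> b"
    using assms(1,4) unfolding graph_def by auto
  have faithful: "\<forall>A B S. A \<subseteq> V \<and> B \<subseteq> V \<and> S \<subseteq> V \<and> A \<inter> B = {}
      \<and> A \<inter> S = {} \<and> B \<inter> S = {} \<and> A \<noteq> {} \<and> B \<noteq> {} \<and> S \<noteq> {}
      \<and> cond_indep M N X A B S \<longrightarrow> separates V E A B S"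
    using assms(2) unfolding perfectly_markov_def by (rule conjunct2)
  have "\<not> cond_indep M N X {a} {b} S" if S: "S \<subseteq> V - {a, b}" "card S = k" for S
  proof
    assume "cond_indep M N X {a} {b} S"
    moreover have "S \<noteq> {}" using S(2) assms(3) by auto
    ultimately have "separates V E {a} {b} S"
      using faithful[rule_format, of "{a}" "{b}" S] singleton_pair_conditions[OF ab S(1)] by simp
    with adjacent_not_separated[OF EV assms(4) S(1)] show False by contradiction
  qed
  with ab show ?thesis unfolding k_graph_edges_def by blast
qed

text \<open>Global Markov property: a non-adjacent pair with a separator S0 is not an edge of
  the k-graph for any k between card S0 and |V| - 2, since S0 padded to size k still
  separates the pair.\<close>
lemma separated_not_in_k_graph:
  assumes "graph V E" "global_markov V E M N X"
    and "separator V E a b S0" "card S0 \<le> k" "k + 2 \<le> card V"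
    and "a \<in> V" "b \<in> V" "a \<noteq> b"
  shows "(a, b) \<notin> k_graph_edges V M N X k"
proof -
  have fin: "finite V" using assms(1) unfolding graph_def by simp
  have "card (V - {a, b}) = card V - 2" using assms(6-8) fin by (simp add: card_Diff_subset)
  then have "k \<le> card (V - {a, b})" using assms(5) by simp
  moreover have "S0 \<subseteq> V - {a, b}" using assms(3) unfolding separator_def by simp
  ultimately obtain S where S: "S0 \<subseteq> S" "S \<subseteq> V - {a, b}" "card S = k"
    using pad_subset[of "V - {a, b}" S0 k] fin assms(4) by auto
  have markov: "\<forall>A B S. A \<subseteq> V \<and> B \<subseteq> V \<and> S \<subseteq> V \<and> A \<inter> B = {}
      \<and> A \<inter> S = {} \<and> B \<inter> S = {} \<and> A \<noteq> {} \<and> B \<noteq> {}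
      \<and> separates V E A B S \<longrightarrow> cond_indep M N X A B S"
    using assms(2) unfolding global_markov_def .
  have "separates V E {a} {b} S"
    using assms(3) separates_mono[OF _ S(1)] unfolding separator_def by blast
  then have "cond_indep M N X {a} {b} S"
    using markov[rule_format, of "{a}" "{b}" S] singleton_pair_conditions[OF assms(6-8) S(2)]
    by simp
  with S show ?thesis unfolding k_graph_edges_def by blast
qed

theorem lemma5:
  fixes V :: "'v set" and E :: "('v \<times> 'v) set"
    and M :: "'a measure" and N :: "'v \<Rightarrow> 'b measure" and X :: "'v \<Rightarrow> 'a \<Rightarrow> 'b"
    and m :: nat
  assumes "graph V E"
    and "connected_graph V E"
    and "\<not> complete_graph V E"
    and "so V E = enat m"
    and "m > 0"
    and "prob_space M"
    and "\<forall>v\<in>V. X v \<in> measurable M (N v)"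
    and "perfectly_markov V E M N X"
  shows "E = k_graph_edges V M N X m"
proof
  show "E \<subseteq> k_graph_edges V M N X m"
    using edge_in_k_graph[OF assms(1,8,5)] by auto
  show "k_graph_edges V M N X m \<subseteq> E"
  proof (rule subsetI, rule ccontr)
    fix p assume p: "p \<in> k_graph_edges V M N X m" "p \<notin> E"
    then obtain a b where ab: "p = (a, b)" "a \<in> V" "b \<in> V" "a \<noteq> b"
      unfolding k_graph_edges_def by auto
    then obtain S0 where "S0 \<in> ms V E a b" "card S0 \<le> m"
      using so_bounds_separators[OF assms(1,3,4)] p(2) by blast
    then have "separator V E a b S0" "card S0 \<le> m" unfolding ms_def by auto
    moreover have "global_markov V E M N X"
      using assms(8) unfolding perfectly_markov_def by simp
    ultimately have "(a, b) \<notin> k_graph_edges V M N X m"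
      using separated_not_in_k_graph[OF assms(1)] so_le_card[OF assms(1,3,4)] ab(2-4)
      by blast
    with p ab show False by simp
  qed
qed

end
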